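(* For every integer $k\ge2$, the matrices $A_k=\begin{pmatrix}1&k\\k-1&1\end{pmatrix}$ and $B_k=\begin{pmatrix}1&(k-1)k\\1&1\end{pmatrix}$ are unitally shift equivalent.
   Context: Two square $\mathbb{N}$-matrices $A,B$ are shift equivalent if there are an integer $\ell\ge1$ and rectangular $\mathbb{N}$-matrices $R,S$ with $A^\ell=RS$, $B^\ell=SR$, $AR=RB$, $BS=SA$. Such a shift equivalence $(R,S)$ is unital if there are $m,k\in\mathbb{N}$ with $(B^t)^mR^t\underline{1}=(B^t)^{m+k}\underline{1}$, where $\underline1$ is the all-ones column vector. $A$ and $B$ are unitally shift equivalent if a unital shift equivalence from $A$ to $B$ exists. *)

theory Defs
  imports "Jordan_Normal_Form.Matrix"
begin

definition shift_equiv_via :: "nat mat \<Rightarrow> nat mat \<Rightarrow> nat \<Rightarrow> nat mat \<Rightarrow> nat mat \<Rightarrow> bool" where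
  "shift_equiv_via A B l R S \<longleftrightarrow>
     A \<in> carrier_mat (dim_row A) (dim_row A) \<and>
     B \<in> carrier_mat (dim_row B) (dim_row B) \<and>
     R \<in> carrier_mat (dim_row A) (dim_row B) \<and>
     S \<in> carrier_mat (dim_row B) (dim_row A) \<and>
     l \<ge> 1 \<and>
     A ^\<^sub>m l = R * S \<and> B ^\<^sub>m l = S * R \<and> A * R = R * B \<and> B * S = S * A"

definition ones_vec :: "nat \<Rightarrow> nat vec" where
  "ones_vec n = vec n (\<lambda>_. 1)"

definition unital_shift_equiv_via :: "nat mat \<Rightarrow> nat mat \<Rightarrow> nat \<Rightarrow> nat mat \<Rightarrow> nat mat \<Rightarrow> bool" where
  "unital_shift_equiv_via A B l R S \<longleftrightarrow>
     shift_equiv_via A B l R S \<and>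
     (\<exists>m k. ((transpose_mat B) ^\<^sub>m m) *\<^sub>v ((transpose_mat R) *\<^sub>v ones_vec (dim_row A))
            = ((transpose_mat B) ^\<^sub>m (m + k)) *\<^sub>v ones_vec (dim_row B))"

definition unitally_shift_equivalent :: "nat mat \<Rightarrow> nat mat \<Rightarrow> bool" where
  "unitally_shift_equivalent A B \<longleftrightarrow> (\<exists>l R S. unital_shift_equiv_via A B l R S)"

end

theory Submission imports Defs begin

text \<open>Write \<open>D = k (k - 1)\<close> and \<open>P + Q \<surd>D = (1 + \<surd>D)\<^sup>n\<close>. Then
  \<open>A\<^sub>k\<^sup>n = [[P, k Q], [(k - 1) Q, P]]\<close> and \<open>P / Q \<longrightarrow> \<surd>D\<close>, which lies strictly between
  \<open>k - 1\<close> and \<open>k\<close>; so for some \<open>n \<ge> 1\<close> both \<open>a = k Q - P\<close> and \<open>b = P - (k - 1) Q\<close>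
  are natural numbers. With \<open>R = [[a, k b], [b, (k - 1) a]]\<close> and \<open>S = [[k - 1, k], [1, 1]]\<close>
  one gets \<open>A\<^sub>k\<^sup>n = R S\<close>, \<open>B\<^sub>k\<^sup>n = S R\<close>, and \<open>R\<^sup>T 1 = (Q, P) = (B\<^sub>k\<^sup>T)\<^sup>n\<^sup>-\<^sup>1 1\<close>,
  which is the unitality condition.\<close>

fun sqrt_pow_coeffs :: "nat \<Rightarrow> nat \<Rightarrow> nat \<times> nat" where
  "sqrt_pow_coeffs D 0 = (1, 0)"
| "sqrt_pow_coeffs D (Suc n) =
     (fst (sqrt_pow_coeffs D n) + D * snd (sqrt_pow_coeffs D n),
      fst (sqrt_pow_coeffs D n) + snd (sqrt_pow_coeffs D n))"

lemma sqrt_pow_coeffs_conj: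
  fixes s :: real
  assumes "s\<^sup>2 = real D"
  shows "real (fst (sqrt_pow_coeffs D n)) + s * real (snd (sqrt_pow_coeffs D n)) = (1 + s) ^ n \<and>
         real (fst (sqrt_pow_coeffs D n)) - s * real (snd (sqrt_pow_coeffs D n)) = (1 - s) ^ n"
proof (induction n)
  case 0
  then show ?case by simp
next
  case (Suc n)
  let ?p = "real (fst (sqrt_pow_coeffs D n))" and ?q = "real (snd (sqrt_pow_coeffs D n))"
  have D: "real D = s * s" using assms by (simp add: power2_eq_square)
  have "(1 + s) ^ Suc n = (?p + s * ?q) * (1 + s)" and "(1 - s) ^ Suc n = (?p - s * ?q) * (1 - s)"
    using Suc by simp_all
  then show ?case by (simp add: D algebra_simps)
qed

lemma sqrt_pow_coeffs_ratio_tendsto: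
  assumes "D > 0"
  shows "(\<lambda>n. real (fst (sqrt_pow_coeffs D n)) / real (snd (sqrt_pow_coeffs D n)))
           \<longlonglongrightarrow> sqrt (real D)"
proof -
  define s where "s = sqrt (real D)"
  define t where "t = (1 - s) / (1 + s)"
  have s_pos: "s > 0" using assms by (simp add: s_def)
  have t_small: "\<bar>t\<bar> < 1" using s_pos by (simp add: t_def abs_less_iff field_simps)
  have ratio: "real (fst (sqrt_pow_coeffs D n)) / real (snd (sqrt_pow_coeffs D n))
                 = s * (1 + t ^ n) / (1 - t ^ n)" if "n \<ge> 1" for n
  proof -
    let ?u = "(1 + s) ^ n" and ?v = "(1 - s) ^ n"
    have conj: "real (fst (sqrt_pow_coeffs D n)) = (?u + ?v) / 2"
               "real (snd (sqrt_pow_coeffs D n)) = (?u - ?v) / (2 * s)"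
      using sqrt_pow_coeffs_conj[of s D n] s_pos by (simp_all add: s_def field_simps)
    have u_pos: "?u > 0" using s_pos by simp
    have "\<bar>t ^ n\<bar> < 1" using t_small that by (simp add: power_abs power_less_one_iff)
    moreover have t_pow: "t ^ n = ?v / ?u" by (simp add: t_def power_divide)
    ultimately have "?u \<noteq> ?v" using u_pos by auto
    have frac: "s * (1 + v / u) / (1 - v / u) = s * (u + v) / (u - v)"
      if "u \<noteq> 0" "u \<noteq> v" for u v :: real
      using that by (simp add: field_simps)
    have "s * (1 + t ^ n) / (1 - t ^ n) = s * (?u + ?v) / (?u - ?v)"
      unfolding t_pow using u_pos \<open>?u \<noteq> ?v\<close> by (intro frac) linarith+
    also have "\<dots> = real (fst (sqrt_pow_coeffs D n)) / real (snd (sqrt_pow_coeffs D n))"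
      using s_pos \<open>?u \<noteq> ?v\<close> unfolding conj by (simp add: field_simps)
    finally show ?thesis ..
  qed
  have "(\<lambda>n. s * (1 + t ^ n) / (1 - t ^ n)) \<longlonglongrightarrow> s * (1 + 0) / (1 - 0)"
    using t_small by (intro tendsto_intros LIMSEQ_abs_realpow_zero2) auto
  then have "(\<lambda>n. s * (1 + t ^ n) / (1 - t ^ n)) \<longlonglongrightarrow> s" by simp
  then show ?thesis
    unfolding s_def[symmetric]
    by (rule Lim_transform_eventually)
       (use ratio in \<open>auto simp: eventually_sequentially intro!: exI[of _ 1]\<close>)
qed

lemma sqrt_pow_coeffs_ratio_between:
  assumes "a\<^sup>2 < D" "D < b\<^sup>2"
  obtains n where "n \<ge> 1"
    "a * snd (sqrt_pow_coeffs D n) \<le> fst (sqrt_pow_coeffs D n)"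
    "fst (sqrt_pow_coeffs D n) \<le> b * snd (sqrt_pow_coeffs D n)"
proof -
  let ?r = "\<lambda>n. real (fst (sqrt_pow_coeffs D n)) / real (snd (sqrt_pow_coeffs D n))"
  have lim: "?r \<longlonglongrightarrow> sqrt (real D)"
    using assms by (intro sqrt_pow_coeffs_ratio_tendsto) auto
  have "real a < sqrt (real D)"
    using assms(1) by (intro real_less_rsqrt) (simp flip: of_nat_power)
  moreover have "sqrt (real D) < real b"
    using assms(2) by (intro real_sqrt_less_mono[of _ "(real b)\<^sup>2", simplified]) (simp flip: of_nat_power)
  ultimately have "\<forall>\<^sub>F n in sequentially. real a < ?r n \<and> ?r n < real b \<and> n \<ge> 1"
    using lim by (intro eventually_conj order_tendstoD eventually_ge_at_top)
  then obtain n where n: "n \<ge> 1" "real a < ?r n" "?r n < real b"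
    by (auto simp: eventually_sequentially)
  then have "snd (sqrt_pow_coeffs D n) > 0" by (cases "snd (sqrt_pow_coeffs D n)") auto
  with n have "real (a * snd (sqrt_pow_coeffs D n)) \<le> real (fst (sqrt_pow_coeffs D n))"
           and "real (fst (sqrt_pow_coeffs D n)) \<le> real (b * snd (sqrt_pow_coeffs D n))"
    by (simp_all add: field_simps)
  with n show ?thesis by (intro that) (simp_all only: of_nat_le_iff)
qed

definition mat2 :: "'a \<Rightarrow> 'a \<Rightarrow> 'a \<Rightarrow> 'a \<Rightarrow> 'a mat" where
  "mat2 a b c d = mat 2 2 (\<lambda>(i, j). if i = 0 then (if j = 0 then a else b) else (if j = 0 then c else d))"

definition vec2 :: "'a \<Rightarrow> 'a \<Rightarrow> 'a vec" where
  "vec2 x y = vec 2 (\<lambda>i. if i = 0 then x else y)"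

lemma less_2_iff: "(i::nat) < 2 \<longleftrightarrow> i = 0 \<or> i = 1" by auto

lemma sum_upto_2: "(\<Sum>i = 0..<2. f i) = f 0 + f (1::nat)"
  by (simp add: numeral_2_eq_2)

lemma mat2_carrier [simp]: "mat2 a b c d \<in> carrier_mat 2 2"
  and dim_row_mat2 [simp]: "dim_row (mat2 a b c d) = 2"
  and dim_col_mat2 [simp]: "dim_col (mat2 a b c d) = 2"
  by (simp_all add: mat2_def)

lemma mat_of_rows_list_mat2: "mat_of_rows_list 2 [[a, b], [c, d]] = mat2 a b c d"
  by (rule eq_matI) (auto simp: mat2_def mat_of_rows_list_def less_2_iff)

lemma one_mat_2: "1\<^sub>m 2 = mat2 1 0 0 (1::'a::semiring_1)"
  by (rule eq_matI) (auto simp: mat2_def less_2_iff)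

lemma mat2_mult:
  "mat2 a b c d * mat2 e f g h =
     mat2 (a * e + b * g) (a * f + b * h) (c * e + d * g) (c * f + d * (h::'a::semiring_0))"
  by (rule eq_matI) (auto simp: mat2_def scalar_prod_def row_def col_def less_2_iff sum_upto_2)

lemma transpose_mat2: "transpose_mat (mat2 a b c d) = mat2 a c b d"
  by (rule eq_matI) (auto simp: mat2_def less_2_iff)

lemma mat2_mult_vec2:
  "mat2 a b c d *\<^sub>v vec2 x y = vec2 (a * x + b * y) (c * x + d * (y::'a::semiring_0))"
  by (rule eq_vecI) (auto simp: mat2_def vec2_def scalar_prod_def row_def less_2_iff sum_upto_2)

lemma ones_vec_2: "ones_vec 2 = vec2 1 1"
  by (rule eq_vecI) (auto simp: ones_vec_def vec2_def)

lemma mat2_pow: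
  assumes "x * y = D"
  shows "mat2 1 x y 1 ^\<^sub>m n =
           mat2 (fst (sqrt_pow_coeffs D n)) (x * snd (sqrt_pow_coeffs D n))
                (y * snd (sqrt_pow_coeffs D n)) (fst (sqrt_pow_coeffs D n))"
  by (induction n) (auto simp: one_mat_2 mat2_mult algebra_simps simp flip: assms)

lemma transpose_pow_mult_ones:
  "transpose_mat (mat2 1 D 1 1) ^\<^sub>m n *\<^sub>v ones_vec 2 =
     vec2 (snd (sqrt_pow_coeffs D (Suc n))) (fst (sqrt_pow_coeffs D (Suc n)))"
proof -
  have "transpose_mat (mat2 1 D 1 1) ^\<^sub>m n =
          mat2 (fst (sqrt_pow_coeffs D n)) (snd (sqrt_pow_coeffs D n))
               (D * snd (sqrt_pow_coeffs D n)) (fst (sqrt_pow_coeffs D n))"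
    using mat2_pow[of 1 D D n] by (simp add: transpose_mat2)
  then show ?thesis by (simp add: ones_vec_2 mat2_mult_vec2 algebra_simps)
qed

lemma shift_equiv_via_factorisation:
  fixes j a b n :: nat
  defines "P \<equiv> fst (sqrt_pow_coeffs (j * (j + 1)) n)"
      and "Q \<equiv> snd (sqrt_pow_coeffs (j * (j + 1)) n)"
  assumes "n \<ge> 1" and "Q = a + b" and "P = j * Q + b"
  shows "shift_equiv_via (mat2 1 (j + 1) j 1) (mat2 1 (j * (j + 1)) 1 1) n
           (mat2 a ((j + 1) * b) b (j * a)) (mat2 j (j + 1) 1 1)"
  unfolding shift_equiv_via_def
proof (intro conjI)
  have "mat2 1 (j + 1) j 1 ^\<^sub>m n = mat2 P ((j + 1) * Q) (j * Q) P"
    unfolding P_def Q_def by (rule mat2_pow) simp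
  then show "mat2 1 (j + 1) j 1 ^\<^sub>m n = mat2 a ((j + 1) * b) b (j * a) * mat2 j (j + 1) 1 1"
    by (simp add: mat2_mult assms(4,5) algebra_simps)
  have "mat2 1 (j * (j + 1)) 1 1 ^\<^sub>m n = mat2 P (j * (j + 1) * Q) Q P"
    using mat2_pow[of "j * (j + 1)" 1 "j * (j + 1)" n] by (simp add: P_def Q_def)
  then show "mat2 1 (j * (j + 1)) 1 1 ^\<^sub>m n = mat2 j (j + 1) 1 1 * mat2 a ((j + 1) * b) b (j * a)"
    by (simp add: mat2_mult assms(4,5) algebra_simps)
qed (use \<open>n \<ge> 1\<close> in \<open>simp_all add: mat2_mult algebra_simps\<close>)

lemma unital_shift_equiv_via_factorisation:
  fixes j a b n :: nat
  defines "P \<equiv> fst (sqrt_pow_coeffs (j * (j + 1)) n)"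
      and "Q \<equiv> snd (sqrt_pow_coeffs (j * (j + 1)) n)"
  assumes "n \<ge> 1" and "Q = a + b" and "P = j * Q + b"
  shows "unital_shift_equiv_via (mat2 1 (j + 1) j 1) (mat2 1 (j * (j + 1)) 1 1) n
           (mat2 a ((j + 1) * b) b (j * a)) (mat2 j (j + 1) 1 1)"
proof -
  let ?B = "mat2 1 (j * (j + 1)) 1 1" and ?R = "mat2 a ((j + 1) * b) b (j * a)"
  have "transpose_mat ?R *\<^sub>v ones_vec 2 = vec2 Q P"
    by (simp add: transpose_mat2 ones_vec_2 mat2_mult_vec2 assms(4,5) algebra_simps)
  moreover have "transpose_mat ?B ^\<^sub>m (n - 1) *\<^sub>v ones_vec 2 = vec2 Q P"
    using transpose_pow_mult_ones[of "j * (j + 1)" "n - 1"] \<open>n \<ge> 1\<close> by (simp add: P_def Q_def)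
  ultimately have "transpose_mat ?B ^\<^sub>m 0 *\<^sub>v (transpose_mat ?R *\<^sub>v ones_vec 2)
                     = transpose_mat ?B ^\<^sub>m (0 + (n - 1)) *\<^sub>v ones_vec 2"
    by (simp add: one_mat_2 mat2_mult_vec2)
  with shift_equiv_via_factorisation[OF assms(3-5)[unfolded P_def Q_def]] show ?thesis
    unfolding unital_shift_equiv_via_def dim_row_mat2 by blast
qed

theorem mainTheorem10:
  fixes k :: nat
  assumes "k \<ge> 2"
  shows "unitally_shift_equivalent
           (mat_of_rows_list 2 [[1, k], [k - 1, 1]])
           (mat_of_rows_list 2 [[1, (k - 1) * k], [1, 1]])"
proof -
  define j where "j = k - 1"
  have j: "j \<ge> 1" "k = j + 1" "k - 1 = j" using assms by (auto simp: j_def)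
  obtain n where n: "n \<ge> 1"
    and lower: "j * snd (sqrt_pow_coeffs (j * (j + 1)) n) \<le> fst (sqrt_pow_coeffs (j * (j + 1)) n)"
    and upper: "fst (sqrt_pow_coeffs (j * (j + 1)) n) \<le> (j + 1) * snd (sqrt_pow_coeffs (j * (j + 1)) n)"
    by (rule sqrt_pow_coeffs_ratio_between[where a = j and b = "j + 1" and D = "j * (j + 1)"])
       (use j in \<open>auto simp: power2_eq_square\<close>)
  define a where "a = (j + 1) * snd (sqrt_pow_coeffs (j * (j + 1)) n) - fst (sqrt_pow_coeffs (j * (j + 1)) n)"
  define b where "b = fst (sqrt_pow_coeffs (j * (j + 1)) n) - j * snd (sqrt_pow_coeffs (j * (j + 1)) n)"
  have "unital_shift_equiv_via (mat2 1 (j + 1) j 1) (mat2 1 (j * (j + 1)) 1 1) n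
          (mat2 a ((j + 1) * b) b (j * a)) (mat2 j (j + 1) 1 1)"
    using lower upper by (intro unital_shift_equiv_via_factorisation n) (simp_all add: a_def b_def)
  then show ?thesis
    unfolding unitally_shift_equivalent_def mat_of_rows_list_mat2 j(3) mult.commute[of j]
    by (auto simp: j(2))
qed

end
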